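(* Let $G$ be a nilpotent group of class $k$, let $v(\bar x,\bar z)$ be a group word in variables $\bar x=(x_1,\dots,x_n)$, $\bar z$ and their inverses, and let $\bar g$ be a tuple of elements of $G$ (of the length of $\bar z$) and $c\in G$. If the set $\{\bar h\in G^n:v(\bar h,\bar g)=c\}$ is $2^k$-large in $G^n$, then $v(\bar h,\bar g)=c$ for all $\bar h\in G^n$.
   Context: A subset $X$ of a group $K$ is $m$-large in $K$ if the intersection of any $m$ left translates $a_1X\cap\dots\cap a_mX$ ($a_i\in K$) is non-empty. *)

theory Defs
  imports "HOL-Algebra.Algebra"
begin

text \<open>Commutator set [A, B] and lower central series
  gamma 0 = G, gamma (Suc i) = subgroup generated by commutators [a, b], a in gamma i, b in G.
  (So gamma i is the (i+1)-th term of the lower central series in the usual 1-based indexing.)\<close>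

definition commutator_set :: "('a, 'b) monoid_scheme \<Rightarrow> 'a set \<Rightarrow> 'a set \<Rightarrow> 'a set" where
  "commutator_set G A B =
     (\<Union>a \<in> A. \<Union>b \<in> B. {inv\<^bsub>G\<^esub> a \<otimes>\<^bsub>G\<^esub> inv\<^bsub>G\<^esub> b \<otimes>\<^bsub>G\<^esub> a \<otimes>\<^bsub>G\<^esub> b})"

fun lower_central :: "('a, 'b) monoid_scheme \<Rightarrow> nat \<Rightarrow> 'a set" where
  "lower_central G 0 = carrier G"
| "lower_central G (Suc i) = generate G (commutator_set G (lower_central G i) (carrier G))"

definition nilpotent_of_class :: "('a, 'b) monoid_scheme \<Rightarrow> nat \<Rightarrow> bool" where
  "nilpotent_of_class G k \<longleftrightarrow>
     group G \<and> lower_central G k = {\<one>\<^bsub>G\<^esub>} \<and> (\<forall>j < k. lower_central G j \<noteq> {\<one>\<^bsub>G\<^esub>})"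

definition m_large :: "('a, 'b) monoid_scheme \<Rightarrow> nat \<Rightarrow> 'a set \<Rightarrow> bool" where
  "m_large K m S \<longleftrightarrow>
     (\<forall>a. (\<forall>i < m. a i \<in> carrier K) \<longrightarrow> (\<Inter>i < m. l_coset K (a i) S) \<noteq> {})"

text \<open>Group words in variables x_0, x_1, ... and z_0, z_1, ... and their inverses:
  a list of letters (variable, exponent sign), True = positive, False = inverse.\<close>
datatype var = Xv nat | Zv nat

type_synonym word = "(var \<times> bool) list"

fun eval_var :: "(nat \<Rightarrow> 'a) \<Rightarrow> (nat \<Rightarrow> 'a) \<Rightarrow> var \<Rightarrow> 'a" where
  "eval_var h g (Xv i) = h i"
| "eval_var h g (Zv j) = g j"

fun eval_word :: "('a, 'b) monoid_scheme \<Rightarrow> (nat \<Rightarrow> 'a) \<Rightarrow> (nat \<Rightarrow> 'a) \<Rightarrow> word \<Rightarrow> 'a" where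
  "eval_word G h g [] = \<one>\<^bsub>G\<^esub>"
| "eval_word G h g ((v, s) # w) =
     (if s then eval_var h g v else inv\<^bsub>G\<^esub> (eval_var h g v)) \<otimes>\<^bsub>G\<^esub> eval_word G h g w"

definition word_vars_in :: "nat \<Rightarrow> nat \<Rightarrow> word \<Rightarrow> bool" where
  "word_vars_in n m w \<longleftrightarrow> (\<forall>(v, s) \<in> set w. (\<forall>i. v = Xv i \<longrightarrow> i < n) \<and> (\<forall>j. v = Zv j \<longrightarrow> j < m))"

abbreviation power_group :: "('a, 'b) monoid_scheme \<Rightarrow> nat \<Rightarrow> (nat \<Rightarrow> 'a) monoid" where
  "power_group G n \<equiv> product_group {..<n} (\<lambda>_. G)"

end

(* Write D_a f (h) = f(h)^-1 f(a h) for the left difference of a map f : K -> G, and let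
   Gamma_i be the lower central series shifted so that Gamma_0 = Gamma_1 = G.  Since
   [Gamma_i, Gamma_j] <= Gamma_(i+j) (a consequence of the Hall-Witt identity), maps all of whose
   j-fold differences take values in Gamma_j are closed under products and commutators; constants
   and coordinate projections are such maps, hence so is every word map h |-> v(h, g).  In class k
   the (k+1)-fold differences of v therefore vanish.  If the level set X = {v = c} is
   2^(t+1)-large, then X \<inter> a^-1 X, on which D_a v = 1, is 2^t-large; so by induction on t
   every D_a v is trivial, v is constant, and its value is c because X is nonempty. *)

theory Submission
  imports Defs
begin

definition commutator :: "('a, 'b) monoid_scheme \<Rightarrow> 'a \<Rightarrow> 'a \<Rightarrow> 'a" where
  "commutator G x y = inv\<^bsub>G\<^esub> x \<otimes>\<^bsub>G\<^esub> inv\<^bsub>G\<^esub> y \<otimes>\<^bsub>G\<^esub> x \<otimes>\<^bsub>G\<^esub> y"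

context group
begin

lemma inv_mult_cancel_left: "x \<in> carrier G \<Longrightarrow> y \<in> carrier G \<Longrightarrow> inv x \<otimes> (x \<otimes> y) = y"
  by (simp add: m_assoc[symmetric])

lemma mult_inv_cancel_left: "x \<in> carrier G \<Longrightarrow> y \<in> carrier G \<Longrightarrow> x \<otimes> (inv x \<otimes> y) = y"
  by (simp add: m_assoc[symmetric])

lemmas group_normalize =
  m_assoc inv_mult_group inv_inv inv_mult_cancel_left mult_inv_cancel_left commutator_def

lemma commutator_closed [simp]:
  "x \<in> carrier G \<Longrightarrow> y \<in> carrier G \<Longrightarrow> commutator G x y \<in> carrier G"
  by (simp add: commutator_def)

lemma inv_commutator:
  "x \<in> carrier G \<Longrightarrow> y \<in> carrier G \<Longrightarrow> inv (commutator G x y) = commutator G y x"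
  by (simp add: group_normalize)

lemma commutator_one_right [simp]: "x \<in> carrier G \<Longrightarrow> commutator G x \<one> = \<one>"
  by (simp add: group_normalize)

lemma conj_commutator:
  assumes "g \<in> carrier G" "x \<in> carrier G" "y \<in> carrier G"
  shows "g \<otimes> commutator G x y \<otimes> inv g = commutator G (g \<otimes> x \<otimes> inv g) (g \<otimes> y \<otimes> inv g)"
  using assms by (simp add: group_normalize)

lemma commutator_inv_right:
  assumes "x \<in> carrier G" "y \<in> carrier G"
  shows "commutator G x (inv y) = y \<otimes> inv (commutator G x y) \<otimes> inv y"
  using assms by (simp add: group_normalize)

lemma commutator_mult_right:
  assumes "x \<in> carrier G" "y \<in> carrier G" "z \<in> carrier G"
  shows "commutator G x (y \<otimes> z) = commutator G x z \<otimes> (inv z \<otimes> commutator G x y \<otimes> z)"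
  using assms by (simp add: group_normalize)

lemma hall_witt:
  assumes "x \<in> carrier G" "y \<in> carrier G" "z \<in> carrier G"
  shows "(inv y \<otimes> commutator G (commutator G x (inv y)) z \<otimes> y)
    \<otimes> (inv z \<otimes> commutator G (commutator G y (inv z)) x \<otimes> z)
    \<otimes> (inv x \<otimes> commutator G (commutator G z (inv x)) y \<otimes> x) = \<one>"
  using assms by (simp add: group_normalize)

lemma three_subgroup:
  assumes N: "N \<lhd> G" and x: "x \<in> carrier G" and y: "y \<in> carrier G" and z: "z \<in> carrier G"
    and yzx: "commutator G (commutator G y (inv z)) x \<in> N"
    and zxy: "commutator G (commutator G z (inv x)) y \<in> N"
  shows "commutator G (commutator G x (inv y)) z \<in> N"
proof -
  interpret N: normal N G by (rule N)
  define T1 where "T1 = inv y \<otimes> commutator G (commutator G x (inv y)) z \<otimes> y"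
  define T2 where "T2 = inv z \<otimes> commutator G (commutator G y (inv z)) x \<otimes> z"
  define T3 where "T3 = inv x \<otimes> commutator G (commutator G z (inv x)) y \<otimes> x"
  have T2: "T2 \<in> N" and T3: "T3 \<in> N"
    unfolding T2_def T3_def using N.inv_op_closed1 x z yzx zxy by auto
  then have "T2 \<otimes> T3 \<in> carrier G" by (simp add: N.mem_carrier)
  moreover have T1: "T1 \<in> carrier G" unfolding T1_def using x y z by simp
  moreover have "T1 \<otimes> (T2 \<otimes> T3) = \<one>"
    using hall_witt[OF x y z] T1 T2 T3 unfolding T1_def T2_def T3_def by (simp add: m_assoc N.mem_carrier)
  ultimately have "T1 = inv (T2 \<otimes> T3)" by (simp add: inv_equality)
  then have "T1 \<in> N" using T2 T3 by simp
  then have "y \<otimes> T1 \<otimes> inv y \<in> N" using N.inv_op_closed2 y by blast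
  moreover have "y \<otimes> T1 \<otimes> inv y = commutator G (commutator G x (inv y)) z"
    unfolding T1_def using x y z by (simp add: group_normalize)
  ultimately show ?thesis by simp
qed

lemma commutator_in_commutator_set:
  "a \<in> A \<Longrightarrow> b \<in> B \<Longrightarrow> commutator G a b \<in> commutator_set G A B"
  unfolding commutator_def commutator_set_def by blast

lemma commutator_setE:
  assumes "h \<in> commutator_set G A B"
  obtains a b where "a \<in> A" "b \<in> B" "h = commutator G a b"
  using assms unfolding commutator_def commutator_set_def by blast

lemma commutator_set_subset:
  "A \<subseteq> carrier G \<Longrightarrow> B \<subseteq> carrier G \<Longrightarrow> commutator_set G A B \<subseteq> carrier G"
  by (auto elim!: commutator_setE simp: subset_iff)

lemma lower_central_normal: "lower_central G i \<lhd> G"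
proof (induction i)
  case 0
  show ?case by (simp add: subgroup_self normal_inv_iff)
next
  case (Suc i)
  interpret N: normal "lower_central G i" G by (rule Suc.IH)
  have sub: "commutator_set G (lower_central G i) (carrier G) \<subseteq> carrier G"
    using N.subset by (intro commutator_set_subset) auto
  have "g \<otimes> h \<otimes> inv g \<in> commutator_set G (lower_central G i) (carrier G)"
    if hC: "h \<in> commutator_set G (lower_central G i) (carrier G)" and g: "g \<in> carrier G" for h g
  proof -
    obtain a b where a: "a \<in> lower_central G i" and b: "b \<in> carrier G"
      and h: "h = commutator G a b"
      using hC by (rule commutator_setE)
    have "g \<otimes> h \<otimes> inv g = commutator G (g \<otimes> a \<otimes> inv g) (g \<otimes> b \<otimes> inv g)"
      using h g b N.mem_carrier[OF a] by (simp add: conj_commutator)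
    then show ?thesis
      using N.inv_op_closed2[OF g a] g b by (simp add: commutator_in_commutator_set)
  qed
  then show ?case
    using sub by (simp add: normal_generateI)
qed

lemma lower_central_subgroup: "subgroup (lower_central G i) G"
  using lower_central_normal by (rule normal_imp_subgroup)

lemma lower_central_subset: "lower_central G i \<subseteq> carrier G"
  using lower_central_subgroup by (rule subgroup.subset)

lemma commutator_lower_central_Suc:
  "a \<in> lower_central G i \<Longrightarrow> b \<in> carrier G \<Longrightarrow> commutator G a b \<in> lower_central G (Suc i)"
  by (simp add: generate.incl commutator_in_commutator_set)

declare lower_central.simps(2) [simp del]

lemma lower_central_inv_closed: "a \<in> lower_central G i \<Longrightarrow> inv a \<in> lower_central G i"
  using lower_central_subgroup by (rule subgroup.m_inv_closed)

lemma commutator_lower_central_Suc_swap: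
  assumes a: "a \<in> lower_central G i" and b: "b \<in> carrier G"
  shows "commutator G b a \<in> lower_central G (Suc i)"
proof -
  have "inv (commutator G a b) \<in> lower_central G (Suc i)"
    using a b by (intro lower_central_inv_closed commutator_lower_central_Suc)
  moreover have "a \<in> carrier G" using a lower_central_subset by blast
  ultimately show ?thesis using b by (simp add: inv_commutator)
qed

lemma lower_central_antimono: "antimono (lower_central G)"
  unfolding antimono_iff_le_Suc
proof
  fix i
  interpret N: normal "lower_central G i" G by (rule lower_central_normal)
  have "commutator G a b \<in> lower_central G i" if "a \<in> lower_central G i" "b \<in> carrier G" for a b
  proof -
    have "commutator G a b = inv a \<otimes> (inv b \<otimes> a \<otimes> b)"
      using that N.mem_carrier by (simp add: group_normalize)
    then show ?thesis using that N.inv_op_closed1 by simp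
  qed
  then have "commutator_set G (lower_central G i) (carrier G) \<subseteq> lower_central G i"
    by (auto elim!: commutator_setE)
  then show "lower_central G (Suc i) \<le> lower_central G i"
    using N.subgroup_axioms by (simp add: lower_central.simps generate_subgroup_incl)
qed

lemma commutator_generate:
  assumes N: "N \<lhd> G" and a: "a \<in> carrier G" and H: "H \<subseteq> carrier G"
    and gen: "\<And>h. h \<in> H \<Longrightarrow> commutator G a h \<in> N"
    and b: "b \<in> generate G H"
  shows "commutator G a b \<in> N"
proof -
  interpret N: normal N G by (rule N)
  show ?thesis
    using b
  proof (induction b rule: generate.induct)
    case one
    then show ?case using a by simp
  next
    case (incl h)
    then show ?case by (rule gen)
  next
    case (inv h)
    then have "h \<in> carrier G" using H by blast
    then show ?case
      using N.inv_op_closed2 gen[OF inv] a by (simp add: commutator_inv_right)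
  next
    case (eng h1 h2)
    then have "h1 \<in> carrier G" "h2 \<in> carrier G" using generate_in_carrier[OF H] by auto
    then show ?case
      using N.inv_op_closed1 eng.IH a by (simp add: commutator_mult_right)
  qed
qed

lemma commutator_lower_central:
  "a \<in> lower_central G i \<Longrightarrow> b \<in> lower_central G j \<Longrightarrow>
    commutator G a b \<in> lower_central G (Suc (i + j))"
proof (induction j arbitrary: i a b)
  case 0
  then show ?case by (simp add: commutator_lower_central_Suc)
next
  case (Suc j)
  let ?N = "lower_central G (Suc (i + Suc j))"
  have a: "a \<in> carrier G" using Suc.prems(1) lower_central_subset by blast
  have "commutator G a h \<in> ?N" if hC: "h \<in> commutator_set G (lower_central G j) (carrier G)" for h
  proof -
    obtain x y where x: "x \<in> lower_central G j" and y: "y \<in> carrier G"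
      and h: "h = commutator G x y"
      using hC by (rule commutator_setE)
    have xG: "x \<in> carrier G" using x lower_central_subset by blast
    have "commutator G (inv y) (inv a) \<in> lower_central G (Suc i)"
      using Suc.prems(1) y by (intro commutator_lower_central_Suc_swap lower_central_inv_closed) simp_all
    from Suc.IH[OF this x] have yax: "commutator G (commutator G (inv y) (inv a)) x \<in> ?N"
      by simp
    have "commutator G a (inv x) \<in> lower_central G (Suc (i + j))"
      using Suc.IH[OF Suc.prems(1) lower_central_inv_closed[OF x]] .
    from commutator_lower_central_Suc[OF this inv_closed[OF y]]
    have axy: "commutator G (commutator G a (inv x)) (inv y) \<in> ?N"
      by simp
    from three_subgroup[OF lower_central_normal xG inv_closed[OF y] a yax axy]
    have "commutator G (commutator G x y) a \<in> ?N"
      using y by simp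
    then have "inv (commutator G (commutator G x y) a) \<in> ?N"
      by (rule lower_central_inv_closed)
    then show ?thesis using h xG y a by (simp add: inv_commutator)
  qed
  moreover have "b \<in> generate G (commutator_set G (lower_central G j) (carrier G))"
    using Suc.prems(2) by (simp add: lower_central.simps(2))
  ultimately show ?case
    using commutator_generate[OF lower_central_normal a commutator_set_subset[OF lower_central_subset subset_refl]]
    by blast
qed

end

locale filtration = group G for G :: "('a, 'b) monoid_scheme" (structure) +
  fixes \<Gamma> :: "nat \<Rightarrow> 'a set"
  assumes subgroup_filtration: "subgroup (\<Gamma> i) G"
    and antimono_filtration: "antimono \<Gamma>"
    and commutator_filtration: "x \<in> \<Gamma> i \<Longrightarrow> y \<in> \<Gamma> j \<Longrightarrow> commutator G x y \<in> \<Gamma> (i + j)"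
    and filtration_1: "\<Gamma> 1 = carrier G"
begin

lemma filtration_subset: "\<Gamma> i \<subseteq> carrier G"
  using subgroup_filtration by (rule subgroup.subset)

lemma filtration_0: "\<Gamma> 0 = carrier G"
  using antimonoD[OF antimono_filtration, of 0 1] filtration_1 filtration_subset by auto

lemma one_filtration: "\<one> \<in> \<Gamma> i"
  using subgroup_filtration by (rule subgroup.one_closed)

lemma mult_filtration: "x \<in> \<Gamma> i \<Longrightarrow> y \<in> \<Gamma> i \<Longrightarrow> x \<otimes> y \<in> \<Gamma> i"
  using subgroup_filtration by (rule subgroup.m_closed)

end

(* The truncated subtraction i - 1 is intended: it makes Gamma_0 = Gamma_1 = G. *)
lemma (in group) lower_central_filtration: "filtration G (\<lambda>i. lower_central G (i - 1))"
proof (intro filtration.intro filtration_axioms.intro)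
  show "group G"
    by (rule is_group)
  show "subgroup (lower_central G (i - 1)) G" for i
    by (rule lower_central_subgroup)
  show "antimono (\<lambda>i. lower_central G (i - 1))"
    using lower_central_antimono by (intro antimonoI) (simp add: antimonoD)
  show "commutator G x y \<in> lower_central G (i + j - 1)"
    if "x \<in> lower_central G (i - 1)" and "y \<in> lower_central G (j - 1)" for x y i j
  proof -
    have "i + j - 1 \<le> Suc (i - 1 + (j - 1))"
      by simp
    then show ?thesis
      using commutator_lower_central[OF that] antimonoD[OF lower_central_antimono] by blast
  qed
  show "lower_central G (1 - 1) = carrier G"
    by simp
qed

definition difference ::
    "('a, 'b) monoid_scheme \<Rightarrow> ('c, 'd) monoid_scheme \<Rightarrow> 'c \<Rightarrow> ('c \<Rightarrow> 'a) \<Rightarrow> 'c \<Rightarrow> 'a" where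
  "difference G K a f h = inv\<^bsub>G\<^esub> (f h) \<otimes>\<^bsub>G\<^esub> f (a \<otimes>\<^bsub>K\<^esub> h)"

(* polynomial_map G K Gamma s i f: for every j <= s, all j-fold differences of f map K into
   Gamma (i + j). *)
fun polynomial_map :: "('a, 'b) monoid_scheme \<Rightarrow> ('c, 'd) monoid_scheme \<Rightarrow> (nat \<Rightarrow> 'a set) \<Rightarrow>
    nat \<Rightarrow> nat \<Rightarrow> ('c \<Rightarrow> 'a) \<Rightarrow> bool" where
  "polynomial_map G K \<Gamma> 0 i f \<longleftrightarrow> (\<forall>h \<in> carrier K. f h \<in> \<Gamma> i)"
| "polynomial_map G K \<Gamma> (Suc s) i f \<longleftrightarrow> (\<forall>h \<in> carrier K. f h \<in> \<Gamma> i) \<and>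
     (\<forall>a \<in> carrier K. polynomial_map G K \<Gamma> s (Suc i) (difference G K a f))"

context group
begin

lemma difference_mult:
  assumes "f h \<in> carrier G" "f (a \<otimes>\<^bsub>K\<^esub> h) \<in> carrier G" "g h \<in> carrier G" "g (a \<otimes>\<^bsub>K\<^esub> h) \<in> carrier G"
  shows "difference G K a (\<lambda>h. f h \<otimes> g h) h =
    difference G K a f h \<otimes> commutator G (difference G K a f h) (g h) \<otimes> difference G K a g h"
  using assms by (simp add: difference_def group_normalize)

(* Here f(a h) = f(h) u and g(a h) = g(h) w, and each factor on the right lies one filtration
   level deeper than [f h, g h]. *)
lemma difference_commutator:
  assumes "f h \<in> carrier G" "f (a \<otimes>\<^bsub>K\<^esub> h) \<in> carrier G" "g h \<in> carrier G" "g (a \<otimes>\<^bsub>K\<^esub> h) \<in> carrier G"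
  defines "u \<equiv> difference G K a f h" and "w \<equiv> difference G K a g h"
  defines "A \<equiv> commutator G (f h) w \<otimes> commutator G (commutator G (f h) w) (commutator G (f h) (g h))
    \<otimes> commutator G (commutator G (f h) (g h)) w"
  shows "difference G K a (\<lambda>h. commutator G (f h) (g h)) h =
    commutator G (commutator G (f h) (g h)) u \<otimes> A \<otimes> commutator G A u \<otimes> commutator G u (g (a \<otimes>\<^bsub>K\<^esub> h))"
  using assms unfolding u_def w_def A_def by (simp add: difference_def group_normalize)

end

locale polynomial_maps = filtration G \<Gamma> + K: group K
  for G :: "('a, 'b) monoid_scheme" (structure) and \<Gamma> and K :: "('c, 'd) monoid_scheme"
begin

abbreviation "pmap \<equiv> polynomial_map G K \<Gamma>"
abbreviation "\<Delta> \<equiv> difference G K"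

lemma polynomial_map_in_filtration: "pmap s i f \<Longrightarrow> h \<in> carrier K \<Longrightarrow> f h \<in> \<Gamma> i"
  by (cases s) auto

lemma polynomial_map_closed: "pmap s i f \<Longrightarrow> h \<in> carrier K \<Longrightarrow> f h \<in> carrier G"
  using polynomial_map_in_filtration filtration_subset by blast

lemma polynomial_map_cong:
  "pmap s i f \<Longrightarrow> (\<And>h. h \<in> carrier K \<Longrightarrow> f h = g h) \<Longrightarrow> pmap s i g"
proof (induction s arbitrary: i f g)
  case 0
  then show ?case by auto
next
  case (Suc s)
  have "pmap s (Suc i) (\<Delta> a g)" if a: "a \<in> carrier K" for a
  proof (rule Suc.IH)
    show "pmap s (Suc i) (\<Delta> a f)" using Suc.prems(1) a by simp
    show "\<Delta> a f h = \<Delta> a g h" if "h \<in> carrier K" for h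
      using Suc.prems(2) that a by (simp add: difference_def)
  qed
  then show ?case using Suc.prems by auto
qed

lemma polynomial_map_SucD: "pmap (Suc s) i f \<Longrightarrow> pmap s i f"
proof (induction s arbitrary: i f)
  case 0
  then show ?case by simp
next
  case (Suc s)
  then show ?case by (metis polynomial_map.simps(2))
qed

lemma polynomial_map_antimono: "pmap s i f \<Longrightarrow> j \<le> i \<Longrightarrow> pmap s j f"
proof (induction s arbitrary: i j f)
  case 0
  then show ?case using antimonoD[OF antimono_filtration] by auto
next
  case (Suc s)
  then show ?case using antimonoD[OF antimono_filtration, of j i] by auto
qed

lemma polynomial_map_const: "c \<in> \<Gamma> i \<Longrightarrow> pmap s i (\<lambda>_. c)"
proof (induction s arbitrary: i c)
  case 0
  then show ?case by simp
next
  case (Suc s)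
  have "c \<in> carrier G" using Suc.prems filtration_subset by blast
  then have "\<Delta> a (\<lambda>_. c) = (\<lambda>_. \<one>)" for a
    by (simp add: difference_def fun_eq_iff)
  then show ?case using Suc.prems Suc.IH[OF one_filtration] by simp
qed

lemma polynomial_map_translate:
  "pmap s i f \<Longrightarrow> b \<in> carrier K \<Longrightarrow> pmap s i (\<lambda>h. f (b \<otimes>\<^bsub>K\<^esub> h))"
proof (induction s arbitrary: i f)
  case 0
  then show ?case by simp
next
  case (Suc s)
  have "pmap s (Suc i) (\<Delta> a (\<lambda>h. f (b \<otimes>\<^bsub>K\<^esub> h)))" if a: "a \<in> carrier K" for a
  proof -
    let ?a = "b \<otimes>\<^bsub>K\<^esub> a \<otimes>\<^bsub>K\<^esub> inv\<^bsub>K\<^esub> b"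
    have "pmap s (Suc i) (\<Delta> ?a f)" using Suc.prems a by simp
    then have "pmap s (Suc i) (\<lambda>h. \<Delta> ?a f (b \<otimes>\<^bsub>K\<^esub> h))" using Suc.IH Suc.prems by blast
    then show ?thesis
    proof (rule polynomial_map_cong)
      fix h assume "h \<in> carrier K"
      then have "?a \<otimes>\<^bsub>K\<^esub> (b \<otimes>\<^bsub>K\<^esub> h) = b \<otimes>\<^bsub>K\<^esub> (a \<otimes>\<^bsub>K\<^esub> h)"
        using a Suc.prems by (simp add: K.m_assoc K.inv_mult_cancel_left)
      then show "\<Delta> ?a f (b \<otimes>\<^bsub>K\<^esub> h) = \<Delta> a (\<lambda>h. f (b \<otimes>\<^bsub>K\<^esub> h)) h"
        by (simp add: difference_def)
    qed
  qed
  then show ?case using Suc.prems by auto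
qed

lemma polynomial_map_mult_Suc:
  assumes mult: "\<And>i f g. pmap s i f \<Longrightarrow> pmap s i g \<Longrightarrow> pmap s i (\<lambda>h. f h \<otimes> g h)"
    and comm: "\<And>i j f g. pmap s i f \<Longrightarrow> pmap s j g \<Longrightarrow>
      pmap s (i + j) (\<lambda>h. commutator G (f h) (g h))"
    and f: "pmap (Suc s) i f" and g: "pmap (Suc s) i g"
  shows "pmap (Suc s) i (\<lambda>h. f h \<otimes> g h)"
proof -
  have "pmap s (Suc i) (\<Delta> a (\<lambda>h. f h \<otimes> g h))" if a: "a \<in> carrier K" for a
  proof -
    have Df: "pmap s (Suc i) (\<Delta> a f)" and Dg: "pmap s (Suc i) (\<Delta> a g)"
      using f g a by auto
    have "pmap s (Suc i + i) (\<lambda>h. commutator G (\<Delta> a f h) (g h))"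
      using comm[OF Df polynomial_map_SucD[OF g]] .
    then have "pmap s (Suc i) (\<lambda>h. commutator G (\<Delta> a f h) (g h))"
      by (rule polynomial_map_antimono) simp
    with Df Dg have "pmap s (Suc i) (\<lambda>h. \<Delta> a f h \<otimes> commutator G (\<Delta> a f h) (g h) \<otimes> \<Delta> a g h)"
      by (intro mult)
    then show ?thesis
      by (rule polynomial_map_cong)
        (simp add: difference_mult polynomial_map_closed[OF f] polynomial_map_closed[OF g] a)
  qed
  then show ?thesis
    using f g by (simp add: mult_filtration)
qed

lemma polynomial_map_commutator_Suc:
  assumes mult: "\<And>i f g. pmap s i f \<Longrightarrow> pmap s i g \<Longrightarrow> pmap s i (\<lambda>h. f h \<otimes> g h)"
    and comm: "\<And>i j f g. pmap s i f \<Longrightarrow> pmap s j g \<Longrightarrow>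
      pmap s (i + j) (\<lambda>h. commutator G (f h) (g h))"
    and f: "pmap (Suc s) i f" and g: "pmap (Suc s) j g"
  shows "pmap (Suc s) (i + j) (\<lambda>h. commutator G (f h) (g h))"
proof -
  have comm': "pmap s l (\<lambda>h. commutator G (f h) (g h))"
    if "pmap s i f" "pmap s j g" "l \<le> i + j" for i j l f g
    using comm[OF that(1,2)] that(3) by (rule polynomial_map_antimono)
  have "pmap s (Suc (i + j)) (\<Delta> a (\<lambda>h. commutator G (f h) (g h)))" if a: "a \<in> carrier K" for a
  proof -
    let ?c = "\<lambda>h. commutator G (f h) (g h)"
    let ?A = "\<lambda>h. commutator G (f h) (\<Delta> a g h)
      \<otimes> commutator G (commutator G (f h) (\<Delta> a g h)) (?c h) \<otimes> commutator G (?c h) (\<Delta> a g h)"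
    have Df: "pmap s (Suc i) (\<Delta> a f)" and Dg: "pmap s (Suc j) (\<Delta> a g)"
      using f g a by auto
    have f0: "pmap s i f" and g0: "pmap s j g"
      using f g by (auto intro: polynomial_map_SucD)
    have c: "pmap s (i + j) ?c"
      using comm[OF f0 g0] .
    have fDg: "pmap s (Suc (i + j)) (\<lambda>h. commutator G (f h) (\<Delta> a g h))"
      using comm[OF f0 Dg] by simp
    have "pmap s (Suc (i + j)) (\<lambda>h. commutator G (commutator G (f h) (\<Delta> a g h)) (?c h))"
      using comm'[OF fDg c] by simp
    moreover have "pmap s (Suc (i + j)) (\<lambda>h. commutator G (?c h) (\<Delta> a g h))"
      using comm'[OF c Dg] by simp
    ultimately have A: "pmap s (Suc (i + j)) ?A"
      using mult[OF mult[OF fDg]] by blast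
    have "pmap s (Suc (i + j)) (\<lambda>h. commutator G (?c h) (\<Delta> a f h))"
      using comm'[OF c Df] by simp
    moreover have "pmap s (Suc (i + j)) (\<lambda>h. commutator G (?A h) (\<Delta> a f h))"
      using comm'[OF A Df] by simp
    moreover have "pmap s (Suc (i + j)) (\<lambda>h. commutator G (\<Delta> a f h) (g (a \<otimes>\<^bsub>K\<^esub> h)))"
      using comm[OF Df polynomial_map_translate[OF g0 a]] by simp
    ultimately have "pmap s (Suc (i + j)) (\<lambda>h. commutator G (?c h) (\<Delta> a f h) \<otimes> ?A h
        \<otimes> commutator G (?A h) (\<Delta> a f h) \<otimes> commutator G (\<Delta> a f h) (g (a \<otimes>\<^bsub>K\<^esub> h)))"
      using mult[OF mult[OF mult[OF _ A]]] by blast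
    then show ?thesis
      by (rule polynomial_map_cong)
        (simp add: difference_commutator polynomial_map_closed[OF f] polynomial_map_closed[OF g] a)
  qed
  then show ?thesis
    using f g by (simp add: commutator_filtration polynomial_map_in_filtration)
qed

lemma polynomial_map_mult_commutator:
  "(\<forall>i f g. pmap s i f \<longrightarrow> pmap s i g \<longrightarrow> pmap s i (\<lambda>h. f h \<otimes> g h)) \<and>
   (\<forall>i j f g. pmap s i f \<longrightarrow> pmap s j g \<longrightarrow> pmap s (i + j) (\<lambda>h. commutator G (f h) (g h)))"
proof (induction s)
  case 0
  then show ?case by (simp add: mult_filtration commutator_filtration)
next
  case (Suc s)
  then show ?case
    using polynomial_map_mult_Suc[of s] polynomial_map_commutator_Suc[of s] by blast
qed

lemma polynomial_map_mult: "pmap s i f \<Longrightarrow> pmap s i g \<Longrightarrow> pmap s i (\<lambda>h. f h \<otimes> g h)"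
  using polynomial_map_mult_commutator by blast

lemma polynomial_map_commutator:
  "pmap s i f \<Longrightarrow> pmap s j g \<Longrightarrow> pmap s (i + j) (\<lambda>h. commutator G (f h) (g h))"
  using polynomial_map_mult_commutator by blast

lemma polynomial_map_hom: "\<pi> \<in> hom K G \<Longrightarrow> pmap s 0 \<pi>"
proof (induction s)
  case 0
  then show ?case by (auto simp: hom_def filtration_0)
next
  case (Suc s)
  have "pmap s 1 (\<Delta> a \<pi>)" if a: "a \<in> carrier K" for a
  proof -
    have \<pi>a: "\<pi> a \<in> \<Gamma> 1" using a Suc.prems filtration_1 by (simp add: hom_in_carrier)
    have "pmap s (1 + 0) (\<lambda>h. commutator G (\<pi> a) (\<pi> h))"
      using polynomial_map_const[OF \<pi>a] Suc.IH[OF Suc.prems] by (rule polynomial_map_commutator)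
    then have "pmap s 1 (\<lambda>h. \<pi> a \<otimes> commutator G (\<pi> a) (\<pi> h))"
      using polynomial_map_mult[OF polynomial_map_const[OF \<pi>a]] by simp
    then show ?thesis
      by (rule polynomial_map_cong)
        (use a Suc.prems in \<open>simp add: hom_mult hom_in_carrier difference_def group_normalize\<close>)
  qed
  then show ?case using Suc.prems by (auto simp: hom_def filtration_0)
qed

lemma polynomial_map_inv_hom: "\<pi> \<in> hom K G \<Longrightarrow> pmap s 0 (\<lambda>h. inv (\<pi> h))"
proof (cases s)
  case 0
  then show "\<pi> \<in> hom K G \<Longrightarrow> ?thesis" by (auto simp: hom_def filtration_0)
next
  case (Suc s')
  assume hom: "\<pi> \<in> hom K G"
  have "pmap s' 1 (\<Delta> a (\<lambda>h. inv (\<pi> h)))" if a: "a \<in> carrier K" for a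
  proof -
    have "inv (\<pi> a) \<in> \<Gamma> 1" using a hom filtration_1 by (simp add: hom_in_carrier)
    then show ?thesis
      by (rule polynomial_map_cong[OF polynomial_map_const])
        (use a hom in \<open>simp add: hom_mult hom_in_carrier difference_def group_normalize\<close>)
  qed
  then show ?thesis using Suc hom by (auto simp: hom_def filtration_0)
qed

lemma fold_difference_in_filtration:
  "pmap s i f \<Longrightarrow> length as = s \<Longrightarrow> set as \<subseteq> carrier K \<Longrightarrow> h \<in> carrier K \<Longrightarrow>
    fold \<Delta> as f h \<in> \<Gamma> (i + s)"
proof (induction as arbitrary: s i f)
  case Nil
  then show ?case by (simp add: polynomial_map_in_filtration)
next
  case (Cons a as)
  then obtain s' where "s = Suc s'" by auto
  with Cons.prems have "pmap s' (Suc i) (\<Delta> a f)" by auto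
  from Cons.IH[OF this] Cons.prems \<open>s = Suc s'\<close> show ?case by simp
qed

end

lemma (in filtration) eval_word_polynomial_map:
  assumes v: "word_vars_in n m v" and g: "\<forall>j < m. g j \<in> carrier G"
  shows "polynomial_map G (power_group G n) \<Gamma> s 0 (\<lambda>h. eval_word G h g v)"
proof -
  interpret polynomial_maps G \<Gamma> "power_group G n"
    unfolding polynomial_maps_def using filtration_axioms by (simp add: product_group is_group)
  show ?thesis
    using v
  proof (induction v)
    case Nil
    show ?case using polynomial_map_const[OF one_filtration] by simp
  next
    case (Cons l w)
    obtain x b where l: "l = (x, b)" by (cases l)
    have w: "word_vars_in n m w" and x: "(\<forall>i. x = Xv i \<longrightarrow> i < n) \<and> (\<forall>j. x = Zv j \<longrightarrow> j < m)"
      using Cons.prems l unfolding word_vars_in_def by auto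
    have "pmap s 0 (\<lambda>h. if b then eval_var h g x else inv (eval_var h g x))"
    proof (cases x)
      case (Xv i)
      with x have "(\<lambda>h. h i) \<in> hom (power_group G n) G"
        unfolding hom_def by (auto simp: PiE_iff)
      then show ?thesis
        using Xv polynomial_map_hom polynomial_map_inv_hom by (cases b) simp_all
    next
      case (Zv j)
      with x g have "g j \<in> \<Gamma> 0" "inv (g j) \<in> \<Gamma> 0"
        by (simp_all add: filtration_0)
      then show ?thesis
        using Zv polynomial_map_const by (cases b) simp_all
    qed
    then show ?case
      using polynomial_map_mult Cons.IH[OF w] l by fastforce
  qed
qed

lemma m_large_nonempty:
  assumes K: "monoid K" and m: "0 < m" and large: "m_large K m S"
  shows "S \<noteq> {}"
proof -
  have "(\<Inter>i < m. l_coset K \<one>\<^bsub>K\<^esub> S) \<noteq> {}"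
    using large[unfolded m_large_def, rule_format, of "\<lambda>_. \<one>\<^bsub>K\<^esub>"] monoid.one_closed[OF K] by simp
  then have "l_coset K \<one>\<^bsub>K\<^esub> S \<noteq> {}"
    using m by (metis INT_constant lessThan_empty_iff not_less0)
  then show ?thesis
    unfolding l_coset_def by blast
qed

lemma m_large_mono:
  assumes ST: "S \<subseteq> T" and large: "m_large K m S"
  shows "m_large K m T"
  unfolding m_large_def
proof (intro allI impI)
  fix a assume "\<forall>i < m. a i \<in> carrier K"
  with large have "(\<Inter>i < m. l_coset K (a i) S) \<noteq> {}"
    unfolding m_large_def by blast
  moreover have "l_coset K (a i) S \<subseteq> l_coset K (a i) T" for i
    using ST unfolding l_coset_def by blast
  ultimately show "(\<Inter>i < m. l_coset K (a i) T) \<noteq> {}"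
    by blast
qed

lemma (in group) l_coset_Int:
  assumes g: "g \<in> carrier G" and A: "A \<subseteq> carrier G" and B: "B \<subseteq> carrier G"
  shows "l_coset G g (A \<inter> B) = l_coset G g A \<inter> l_coset G g B"
proof
  show "l_coset G g (A \<inter> B) \<subseteq> l_coset G g A \<inter> l_coset G g B"
    unfolding l_coset_def by blast
  show "l_coset G g A \<inter> l_coset G g B \<subseteq> l_coset G g (A \<inter> B)"
  proof
    fix x assume "x \<in> l_coset G g A \<inter> l_coset G g B"
    then obtain a b where a: "a \<in> A" and b: "b \<in> B" and "x = g \<otimes> a" "x = g \<otimes> b"
      unfolding l_coset_def by blast
    moreover from this have "a = b"
      using g subsetD[OF A a] subsetD[OF B b] by simp
    ultimately show "x \<in> l_coset G g (A \<inter> B)"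
      unfolding l_coset_def by blast
  qed
qed

lemma (in group) m_large_Int_l_coset:
  assumes a: "a \<in> carrier G" and S: "S \<subseteq> carrier G" and large: "m_large G (2 * m) S"
  shows "m_large G m (S \<inter> l_coset G a S)"
  unfolding m_large_def
proof (intro allI impI)
  fix b assume b: "\<forall>i < m. b i \<in> carrier G"
  define b' where "b' i = (if i < m then b i else b (i - m) \<otimes> a)" for i
  have "b' i \<in> carrier G" if "i < 2 * m" for i
  proof (cases "i < m")
    case True
    then show ?thesis using b by (simp add: b'_def)
  next
    case False
    with that have "i - m < m" by linarith
    with False show ?thesis using a b by (simp add: b'_def)
  qed
  with large obtain y where y: "y \<in> (\<Inter>i < 2 * m. l_coset G (b' i) S)"
    unfolding m_large_def by blast
  have "y \<in> l_coset G (b i) (S \<inter> l_coset G a S)" if i: "i < m" for i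
  proof -
    have "y \<in> l_coset G (b' i) S" "y \<in> l_coset G (b' (i + m)) S"
      using y i by auto
    then have "y \<in> l_coset G (b i) S" "y \<in> l_coset G (b i \<otimes> a) S"
      using i by (simp_all add: b'_def)
    then show ?thesis
      using i a b S by (simp add: lcos_m_assoc l_coset_Int l_coset_subset_G)
  qed
  then show "(\<Inter>i < m. l_coset G (b i) (S \<inter> l_coset G a S)) \<noteq> {}"
    by blast
qed

context group
begin

lemma eq_if_difference_trivial:
  assumes K: "group K" and f: "f \<in> carrier K \<rightarrow> carrier G"
    and trivial: "\<And>a h. a \<in> carrier K \<Longrightarrow> h \<in> carrier K \<Longrightarrow> difference G K a f h = \<one>"
    and m: "0 < m" and large: "m_large K m {h \<in> carrier K. f h = c}"
    and h: "h \<in> carrier K"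
  shows "f h = c"
proof -
  interpret K: group K by (rule K)
  obtain x where x: "x \<in> carrier K" "f x = c"
    using m_large_nonempty[OF K.is_monoid m large] by blast
  have "h \<otimes>\<^bsub>K\<^esub> inv\<^bsub>K\<^esub> x \<otimes>\<^bsub>K\<^esub> x = h"
    using h x by (simp add: K.m_assoc)
  then have "inv (f x) \<otimes> f h = \<one>"
    using trivial[of "h \<otimes>\<^bsub>K\<^esub> inv\<^bsub>K\<^esub> x" x] h x by (simp add: difference_def)
  then show ?thesis
    using f h x by (metis Pi_mem inv_closed inv_equality inv_inv)
qed

lemma difference_level_set:
  fixes f :: "'c \<Rightarrow> 'a"
  assumes K: "group K" and a: "a \<in> carrier K" and c: "c \<in> carrier G"
  defines "S \<equiv> {h \<in> carrier K. f h = c}"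
  shows "S \<inter> l_coset K (inv\<^bsub>K\<^esub> a) S \<subseteq> {h \<in> carrier K. difference G K a f h = \<one>}"
proof
  interpret K: group K by (rule K)
  fix h assume "h \<in> S \<inter> l_coset K (inv\<^bsub>K\<^esub> a) S"
  then obtain x where h: "h \<in> S" and x: "x \<in> S" and hx: "h = inv\<^bsub>K\<^esub> a \<otimes>\<^bsub>K\<^esub> x"
    unfolding l_coset_def by blast
  then have "a \<otimes>\<^bsub>K\<^esub> h = x"
    using a by (simp add: S_def K.mult_inv_cancel_left)
  then show "h \<in> {h \<in> carrier K. difference G K a f h = \<one>}"
    using h x c by (simp add: S_def difference_def)
qed

lemma const_if_large_level_set:
  assumes K: "group K" and f: "f \<in> carrier K \<rightarrow> carrier G" and c: "c \<in> carrier G"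
    and vanish: "\<And>as h. length as = Suc t \<Longrightarrow> set as \<subseteq> carrier K \<Longrightarrow> h \<in> carrier K \<Longrightarrow>
      fold (difference G K) as f h = \<one>"
    and large: "m_large K (2 ^ t) {h \<in> carrier K. f h = c}"
    and h: "h \<in> carrier K"
  shows "f h = c"
  using f c vanish large h
proof (induction t arbitrary: f c h)
  case 0
  show ?case
  proof (rule eq_if_difference_trivial[OF K "0.prems"(1) _ _ "0.prems"(4,5)])
    show "difference G K a f h = \<one>" if "a \<in> carrier K" "h \<in> carrier K" for a h
      using "0.prems"(3)[of "[a]"] that by simp
  qed simp
next
  case (Suc t)
  interpret K: group K by (rule K)
  show ?case
  proof (rule eq_if_difference_trivial[OF K Suc.prems(1) _ _ Suc.prems(4,5)])
    fix a h assume a: "a \<in> carrier K" and h: "h \<in> carrier K"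
    show "difference G K a f h = \<one>"
    proof (rule Suc.IH[OF _ one_closed _ _ h])
      show "difference G K a f \<in> carrier K \<rightarrow> carrier G"
        using Suc.prems(1) a by (auto simp: difference_def Pi_iff)
      show "fold (difference G K) as (difference G K a f) h = \<one>"
        if "length as = Suc t" "set as \<subseteq> carrier K" "h \<in> carrier K" for as h
        using Suc.prems(3)[of "a # as"] that a by simp
      have "m_large K (2 ^ t)
          ({h \<in> carrier K. f h = c} \<inter> l_coset K (inv\<^bsub>K\<^esub> a) {h \<in> carrier K. f h = c})"
        using Suc.prems(4) a by (intro K.m_large_Int_l_coset) auto
      then show "m_large K (2 ^ t) {h \<in> carrier K. difference G K a f h = \<one>}"
        using difference_level_set[OF K a Suc.prems(2)] by (rule m_large_mono[rotated])
    qed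
  qed simp

qed

end

theorem theorem6p5:
  fixes G :: "('a, 'b) monoid_scheme" and k n m :: nat and v :: word
    and g :: "nat \<Rightarrow> 'a" and c :: 'a
  assumes "nilpotent_of_class G k"
    and "word_vars_in n m v"
    and "\<forall>j < m. g j \<in> carrier G"
    and "c \<in> carrier G"
    and "m_large (power_group G n) (2 ^ k)
           {h \<in> carrier (power_group G n). eval_word G h g v = c}"
  shows "\<forall>h \<in> carrier (power_group G n). eval_word G h g v = c"
proof
  fix h assume h: "h \<in> carrier (power_group G n)"
  from assms(1) have G: "group G" and trivial: "lower_central G k = {\<one>\<^bsub>G\<^esub>}"
    unfolding nilpotent_of_class_def by auto
  interpret group G by (rule G)
  interpret polynomial_maps G "\<lambda>i. lower_central G (i - 1)" "power_group G n"
    unfolding polynomial_maps_def using lower_central_filtration by (simp add: product_group G)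
  let ?w = "\<lambda>h. eval_word G h g v"
  have w: "pmap (Suc k) 0 ?w"
    using assms(2,3) by (rule eval_word_polynomial_map)
  have "fold \<Delta> as ?w h' = \<one>\<^bsub>G\<^esub>"
    if "length as = Suc k" "set as \<subseteq> carrier (power_group G n)" "h' \<in> carrier (power_group G n)" for as h'
    using fold_difference_in_filtration[OF w that] trivial by simp
  moreover have "?w \<in> carrier (power_group G n) \<rightarrow> carrier G"
    using polynomial_map_closed[OF w] by blast
  ultimately show "?w h = c"
    using const_if_large_level_set[OF product_group[OF G] _ assms(4) _ assms(5) h] by blast
qed

end
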